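(* Let $V$ be a real vector space of dimension $n$, $1\le k\le n-1$, and let $L\subseteq V\oplus\wedge^kV^*$ be weakly lagrangian. Then $L\cap V=\{0\}$ if and only if $L=\{\Lambda(\alpha)+\alpha\mid\alpha\in S\}$ is the graph of a higher Poisson structure $(S,\Lambda)$ on $V$. In this case, $L$ is lagrangian if and only if $L$ is standard (i.e. $\mathrm{rank}(\Lambda)=n$ or $\mathrm{rank}(\Lambda)\le n-k$) and $\mathrm{Ann}(\mathrm{Im}(\Lambda))=\ker(\Lambda)$.
   Context: On $V\oplus\wedge^kV^*$ consider the pairing $\langle X+\alpha,Y+\beta\rangle=i_X\beta+i_Y\alpha\in\wedge^{k-1}V^*$; $L^\perp$ is the orthogonal of $L$; $L$ is isotropic if $L\subseteq L^\perp$, lagrangian if $L=L^\perp$, and weakly lagrangian if isotropic and $L\cap V=\mathrm{pr}_2(L)^\circ$, where $\mathrm{pr}_2$ is the projection to $\wedge^kV^*$ and for $S\subseteq\wedge^kV^*$, $S^\circ=\{X\in V\mid i_X\eta=0\ \forall\eta\in S\}$. For $E\subseteq V$, $\mathrm{Ann}(E)=\{\alpha\in\wedge^kV^*\mid i_Y\alpha=0\ \forall Y\in E\}$. An isotropic $L$ is standard if $\mathrm{Ann}(E)^\circ=E$ where $E=\mathrm{pr}_1(L)$, equivalently $\dim E=n$ or $\dim E\le n-k$. A higher Poisson structure on $V$ is a pair $(S,\Lambda)$ with $S\subseteq\wedge^kV^*$ a subspace and $\Lambda:S\to V$ linear such that $S^\circ=\{0\}$ and $i_{\Lambda(\alpha)}\beta=-i_{\Lambda(\beta)}\alpha$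 for all $\alpha,\beta\in S$. *)

theory Defs
  imports "HOL-Analysis.Analysis"
begin

text \<open>Model: V is a finite-dimensional real vector space, given as a type
 'v :: euclidean_space with DIM('v) = n.  A k-form on V is represented as a function
 on lists of vectors that is multilinear and alternating on lists of length k and
 vanishes on lists of any other length.\<close>

type_synonym 'v form = "'v list \<Rightarrow> real"

definition is_form :: "nat \<Rightarrow> ('v::real_vector) form \<Rightarrow> bool" where
  "is_form k f \<longleftrightarrow>
     (\<forall>ys. length ys \<noteq> k \<longrightarrow> f ys = 0) \<and>
     (\<forall>ys i. i < length ys \<longrightarrow> linear (\<lambda>x. f (ys[i := x]))) \<and>
     (\<forall>ys i j. i < j \<and> j < length ys \<and> ys ! i = ys ! j \<longrightarrow> f ys = 0)"

definition Forms :: "nat \<Rightarrow> ('v::real_vector) form set" where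
  "Forms k = {f. is_form k f}"

definition contr :: "'v \<Rightarrow> 'v form \<Rightarrow> 'v form" where
  "contr X \<alpha> = (\<lambda>ys. \<alpha> (X # ys))"

definition pairing :: "('v \<times> 'v form) \<Rightarrow> ('v \<times> 'v form) \<Rightarrow> 'v form" where
  "pairing u w = (\<lambda>ys. contr (fst u) (snd w) ys + contr (fst w) (snd u) ys)"

definition Amb :: "nat \<Rightarrow> (('v::real_vector) \<times> 'v form) set" where
  "Amb k = UNIV \<times> Forms k"

text \<open>Linear subspaces, spelled out (function spaces carry no vector space
 instance in the library).\<close>
definition form_subspace :: "nat \<Rightarrow> ('v::real_vector) form set \<Rightarrow> bool" where
  "form_subspace k S \<longleftrightarrow> S \<subseteq> Forms k \<and> (\<lambda>_. 0) \<in> S \<and>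
     (\<forall>a\<in>S. \<forall>b\<in>S. (\<lambda>ys. a ys + b ys) \<in> S) \<and>
     (\<forall>c::real. \<forall>a\<in>S. (\<lambda>ys. c * a ys) \<in> S)"

definition amb_subspace :: "nat \<Rightarrow> (('v::real_vector) \<times> 'v form) set \<Rightarrow> bool" where
  "amb_subspace k L \<longleftrightarrow> L \<subseteq> Amb k \<and> (0, \<lambda>_. 0) \<in> L \<and>
     (\<forall>u\<in>L. \<forall>w\<in>L. (fst u + fst w, \<lambda>ys. snd u ys + snd w ys) \<in> L) \<and>
     (\<forall>c::real. \<forall>u\<in>L. (c *\<^sub>R fst u, \<lambda>ys. c * snd u ys) \<in> L)"

definition perp :: "nat \<Rightarrow> (('v::real_vector) \<times> 'v form) set \<Rightarrow> ('v \<times> 'v form) set" where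
  "perp k L = {u \<in> Amb k. \<forall>w\<in>L. pairing u w = (\<lambda>_. 0)}"

definition isotropic :: "nat \<Rightarrow> (('v::real_vector) \<times> 'v form) set \<Rightarrow> bool" where
  "isotropic k L \<longleftrightarrow> L \<subseteq> perp k L"

definition lagrangian :: "nat \<Rightarrow> (('v::real_vector) \<times> 'v form) set \<Rightarrow> bool" where
  "lagrangian k L \<longleftrightarrow> L = perp k L"

definition capV :: "('v \<times> 'v form) set \<Rightarrow> ('v::real_vector) set" where
  "capV L = {X. (X, \<lambda>_. 0) \<in> L}"

definition circ :: "('v::real_vector) form set \<Rightarrow> 'v set" where
  "circ S = {X. \<forall>\<eta>\<in>S. contr X \<eta> = (\<lambda>_. 0)}"

definition Ann :: "nat \<Rightarrow> ('v::real_vector) set \<Rightarrow> 'v form set" where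
  "Ann k E = {\<alpha> \<in> Forms k. \<forall>Y\<in>E. contr Y \<alpha> = (\<lambda>_. 0)}"

definition weakly_lagrangian :: "nat \<Rightarrow> (('v::real_vector) \<times> 'v form) set \<Rightarrow> bool" where
  "weakly_lagrangian k L \<longleftrightarrow> isotropic k L \<and> capV L = circ (snd ` L)"

definition standard :: "nat \<Rightarrow> (('v::real_vector) \<times> 'v form) set \<Rightarrow> bool" where
  "standard k L \<longleftrightarrow> isotropic k L \<and> circ (Ann k (fst ` L)) = fst ` L"

definition higher_poisson ::
  "nat \<Rightarrow> ('v::real_vector) form set \<Rightarrow> ('v form \<Rightarrow> 'v) \<Rightarrow> bool" where
  "higher_poisson k S \<Lambda> \<longleftrightarrow> form_subspace k S \<and>
     (\<forall>a\<in>S. \<forall>b\<in>S. \<Lambda> (\<lambda>ys. a ys + b ys) = \<Lambda> a + \<Lambda> b) \<and>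
     (\<forall>c::real. \<forall>a\<in>S. \<Lambda> (\<lambda>ys. c * a ys) = c *\<^sub>R \<Lambda> a) \<and>
     circ S = {0} \<and>
     (\<forall>\<alpha>\<in>S. \<forall>\<beta>\<in>S. contr (\<Lambda> \<alpha>) \<beta> = (\<lambda>ys. - contr (\<Lambda> \<beta>) \<alpha> ys))"

definition graph :: "('v::real_vector) form set \<Rightarrow> ('v form \<Rightarrow> 'v) \<Rightarrow> ('v \<times> 'v form) set" where
  "graph S \<Lambda> = {(\<Lambda> \<alpha>, \<alpha>) | \<alpha>. \<alpha> \<in> S}"

end

theory Submission
  imports Defs
begin

text \<open>Write \<open>E = \<Lambda>(S)\<close> and \<open>K = ker \<Lambda>\<close>. If \<open>(\<Lambda> a, a)\<close> are the elements of \<open>L\<close>, then \<open>L \<inter> V = {0}\<close>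
  says exactly that \<open>a \<mapsto> \<Lambda> a\<close> is well defined, and isotropy of \<open>L\<close> is the skew condition
  on \<open>\<Lambda>\<close>. For the lagrangian part one computes the projection of \<open>L\<^sup>\<perp>\<close> to \<open>V\<close>: it is
  \<open>K\<^sup>\<circ>\<close>. The inclusion \<open>\<supseteq>\<close> is the heart of the matter: for \<open>X \<in> K\<^sup>\<circ>\<close> the map
  \<open>\<Lambda> a \<mapsto> -i\<^sub>X a\<close> is a well-defined linear map \<open>\<phi>\<close> from \<open>E\<close> to \<open>(k-1)\<close>-forms with
  \<open>i\<^sub>Y \<phi>(Y') = -i\<^sub>Y\<^sub>' \<phi>(Y)\<close>, and every such map is the contraction \<open>Y \<mapsto> i\<^sub>Y \<beta>\<close> of a
  \<open>k\<close>-form \<open>\<beta>\<close>; this is built along a basis of \<open>E\<close> by adding at each step \<open>g \<and> \<psi>\<close> for a linear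
  functional \<open>g\<close> dual to the new basis vector. Hence \<open>L = L\<^sup>\<perp>\<close> forces \<open>Ann(E) = K\<close> and
  \<open>Ann(E)\<^sup>\<circ> = K\<^sup>\<circ> = E\<close>; conversely these two identities let one write any
  \<open>(X, \<beta>) \<in> L\<^sup>\<perp>\<close> as \<open>(\<Lambda> a, a)\<close>.\<close>

definition multilinear :: "('v::real_vector) form \<Rightarrow> bool" where
  "multilinear \<psi> \<longleftrightarrow> (\<forall>ys i. i < length ys \<longrightarrow> linear (\<lambda>x. \<psi> (ys[i := x])))"

definition alternating :: "('v::real_vector) form \<Rightarrow> bool" where
  "alternating \<psi> \<longleftrightarrow> (\<forall>ys i j. i < j \<and> j < length ys \<and> ys ! i = ys ! j \<longrightarrow> \<psi> ys = 0)"

lemma is_form_iff: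
  "is_form k \<psi> \<longleftrightarrow> (\<forall>ys. length ys \<noteq> k \<longrightarrow> \<psi> ys = 0) \<and> multilinear \<psi> \<and> alternating \<psi>"
  unfolding is_form_def multilinear_def alternating_def by blast

lemma is_form_multilinear: "is_form k \<psi> \<Longrightarrow> multilinear \<psi>"
  by (simp add: is_form_iff)

lemma is_form_alternating: "is_form k \<psi> \<Longrightarrow> alternating \<psi>"
  by (simp add: is_form_iff)

lemma is_form_add: "is_form k a \<Longrightarrow> is_form k b \<Longrightarrow> is_form k (\<lambda>ys. a ys + b ys)"
  unfolding is_form_def by (auto simp: linear_iff algebra_simps)

lemma is_form_diff: "is_form k a \<Longrightarrow> is_form k b \<Longrightarrow> is_form k (\<lambda>ys. a ys - b ys)"
  unfolding is_form_def by (auto simp: linear_iff algebra_simps)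

lemma is_form_uminus: "is_form k a \<Longrightarrow> is_form k (\<lambda>ys. - a ys)"
  unfolding is_form_def by (auto simp: linear_iff algebra_simps)

lemma is_form_zero: "is_form k (\<lambda>ys. 0)"
  unfolding is_form_def by (auto simp: linear_iff)

lemma multilinearD: "multilinear \<psi> \<Longrightarrow> i < length ys \<Longrightarrow> linear (\<lambda>x. \<psi> (ys[i := x]))"
  unfolding multilinear_def by blast

lemma multilinear_hd:
  assumes "multilinear \<psi>"
  shows "\<psi> ((a + b) # ys) = \<psi> (a # ys) + \<psi> (b # ys)" "\<psi> ((c *\<^sub>R a) # ys) = c * \<psi> (a # ys)"
proof -
  have "linear (\<lambda>x. \<psi> ((a # ys)[0 := x]))"
    using multilinearD[OF assms, of 0 "a # ys"] by simp
  then show "\<psi> ((a + b) # ys) = \<psi> (a # ys) + \<psi> (b # ys)" "\<psi> ((c *\<^sub>R a) # ys) = c * \<psi> (a # ys)"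
    by (auto simp: linear_iff)
qed

lemma multilinear_add_second:
  assumes "multilinear \<psi>"
  shows "\<psi> (z # (a + b) # ys) = \<psi> (z # a # ys) + \<psi> (z # b # ys)"
proof -
  have "linear (\<lambda>x. \<psi> ((z # a # ys)[1 := x]))"
    using multilinearD[OF assms, of 1 "z # a # ys"] by simp
  then show ?thesis by (auto simp: linear_iff)
qed

lemma multilinear_contr:
  assumes "multilinear \<psi>"
  shows "multilinear (contr y \<psi>)"
  unfolding multilinear_def
proof (intro allI impI)
  fix ys :: "'a list" and i
  assume "i < length ys"
  then show "linear (\<lambda>x. contr y \<psi> (ys[i := x]))"
    using multilinearD[OF assms, of "Suc i" "y # ys"] by (simp add: contr_def)
qed

lemma alternating_contr: "alternating \<psi> \<Longrightarrow> alternating (contr y \<psi>)"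
  unfolding alternating_def contr_def
proof (intro allI impI)
  fix ys :: "'a list" and i j
  assume alt: "\<forall>ys i j. i < j \<and> j < length ys \<and> ys ! i = ys ! j \<longrightarrow> \<psi> ys = 0"
    and "i < j \<and> j < length ys \<and> ys ! i = ys ! j"
  then show "\<psi> (y # ys) = 0" using alt[rule_format, of "Suc i" "Suc j" "y # ys"] by auto
qed

lemma is_form_contr: "is_form (Suc m) \<psi> \<Longrightarrow> is_form m (contr y \<psi>)"
  using multilinear_contr alternating_contr by (auto simp: is_form_iff contr_def)

lemma contr_zero_left: "multilinear \<psi> \<Longrightarrow> contr 0 \<psi> = (\<lambda>_. 0)"
  using multilinear_hd(2)[of \<psi> 0 0] by (simp add: contr_def)

lemma contr_add_left:
  "multilinear \<psi> \<Longrightarrow> contr (Y + c *\<^sub>R Z) \<psi> = (\<lambda>ys. contr Y \<psi> ys + c * contr Z \<psi> ys)"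
  by (simp add: contr_def multilinear_hd)

lemma contr_contr_same: "alternating \<psi> \<Longrightarrow> contr y (contr y \<psi>) = (\<lambda>_. 0)"
  unfolding alternating_def contr_def
  by (auto intro!: ext) (metis One_nat_def length_Cons nth_Cons_0 nth_Cons_Suc zero_less_Suc Suc_less_eq)

lemma alternating_swap:
  assumes "multilinear \<psi>" "alternating \<psi>"
  shows "\<psi> (a # b # ys) = - \<psi> (b # a # ys)"
proof -
  have diag: "\<psi> (x # x # ys) = 0" for x
    using contr_contr_same[OF assms(2)] by (simp add: contr_def fun_eq_iff)
  have "0 = \<psi> ((a + b) # (a + b) # ys)" using diag by simp
  also have "\<dots> = \<psi> (a # a # ys) + \<psi> (a # b # ys) + \<psi> (b # a # ys) + \<psi> (b # b # ys)"
    using multilinear_hd(1)[OF assms(1)] multilinear_add_second[OF assms(1)] by simp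
  finally show ?thesis using diag by simp
qed

lemma contr_commute:
  "multilinear \<psi> \<Longrightarrow> alternating \<psi> \<Longrightarrow> contr y (contr z \<psi>) = (\<lambda>ys. - contr z (contr y \<psi>) ys)"
  by (simp add: contr_def fun_eq_iff alternating_swap[of \<psi> z y])

lemma contr_add: "contr y (\<lambda>ys. a ys + b ys) = (\<lambda>ys. contr y a ys + contr y b ys)"
  by (simp add: contr_def)

lemma contr_diff: "contr y (\<lambda>ys. a ys - b ys) = (\<lambda>ys. contr y a ys - contr y b ys)"
  by (simp add: contr_def)

lemma contr_uminus: "contr y (\<lambda>ys. - a ys) = (\<lambda>ys. - contr y a ys)"
  by (simp add: contr_def)

lemma contr_zero: "contr y (\<lambda>ys. 0) = (\<lambda>ys. 0)"
  by (simp add: contr_def)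

text \<open>\<open>wedge1 g \<psi>\<close> is \<open>g \<and> \<psi>\<close> for a linear functional \<open>g\<close>, defined by the Leibniz rule
  \<open>i\<^sub>y (g \<and> \<psi>) = g(y) \<psi> - g \<and> i\<^sub>y \<psi>\<close>.\<close>

primrec wedge1 :: "('v \<Rightarrow> real) \<Rightarrow> 'v form \<Rightarrow> 'v form" where
  "wedge1 g \<psi> [] = 0"
| "wedge1 g \<psi> (y # ys) = g y * \<psi> ys - wedge1 g (contr y \<psi>) ys"

lemma contr_wedge1: "contr y (wedge1 g \<psi>) = (\<lambda>ys. g y * \<psi> ys - wedge1 g (contr y \<psi>) ys)"
  by (simp add: contr_def)

lemma wedge1_zero: "wedge1 g (\<lambda>_. 0) ys = 0"
  by (induction ys) (simp_all add: contr_zero)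

lemma wedge1_add: "wedge1 g (\<lambda>zs. a zs + b zs) ys = wedge1 g a ys + wedge1 g b ys"
  by (induction ys arbitrary: a b) (simp_all add: contr_add algebra_simps)

lemma wedge1_scale: "wedge1 g (\<lambda>zs. c * a zs) ys = c * wedge1 g a ys"
  by (induction ys arbitrary: a) (simp_all add: contr_def algebra_simps)

lemma wedge1_uminus: "wedge1 g (\<lambda>zs. - a zs) ys = - wedge1 g a ys"
  by (induction ys arbitrary: a) (simp_all add: contr_uminus algebra_simps)

lemma wedge1_degree:
  "(\<forall>zs. length zs \<noteq> m \<longrightarrow> \<psi> zs = 0) \<Longrightarrow> length ys \<noteq> Suc m \<Longrightarrow> wedge1 g \<psi> ys = 0"
proof (induction ys arbitrary: \<psi> m)
  case Nil
  then show ?case by simp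
next
  case (Cons y ys)
  show ?case
  proof (cases m)
    case 0
    then have "contr y \<psi> = (\<lambda>_. 0)" using Cons.prems by (auto simp: contr_def)
    then show ?thesis using Cons.prems by (simp add: wedge1_zero)
  next
    case (Suc m')
    then have "wedge1 g (contr y \<psi>) ys = 0"
      using Cons.IH[of m' "contr y \<psi>"] Cons.prems by (auto simp: contr_def)
    then show ?thesis using Cons.prems by simp
  qed
qed

lemma multilinear_wedge1:
  assumes "linear g" "multilinear \<psi>"
  shows "multilinear (wedge1 g \<psi>)"
  unfolding multilinear_def
proof (intro allI impI)
  fix ys :: "'a list" and i
  show "i < length ys \<Longrightarrow> linear (\<lambda>x. wedge1 g \<psi> (ys[i := x]))"
    using assms(2)
  proof (induction ys arbitrary: \<psi> i)
    case Nil
    then show ?case by simp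
  next
    case (Cons y ys)
    show ?case
    proof (cases i)
      case 0
      have "contr (x + x') \<psi> = (\<lambda>zs. contr x \<psi> zs + contr x' \<psi> zs)"
        and "contr (c *\<^sub>R x) \<psi> = (\<lambda>zs. c * contr x \<psi> zs)" for x x' c
        using multilinear_hd[OF Cons.prems(2)] by (simp_all add: contr_def)
      then show ?thesis using 0 assms(1)
        by (simp add: linear_iff wedge1_add wedge1_scale algebra_simps)
    next
      case (Suc j)
      have "linear (\<lambda>x. \<psi> (ys[j := x]))"
        using Cons.prems Suc unfolding multilinear_def by simp
      moreover have "linear (\<lambda>x. wedge1 g (contr y \<psi>) (ys[j := x]))"
        using Cons.IH[OF _ multilinear_contr[OF Cons.prems(2)]] Cons.prems(1) Suc by simp
      ultimately show ?thesis using Suc by (simp add: linear_iff algebra_simps)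
    qed
  qed
qed

lemma wedge1_contr_repeated:
  assumes "multilinear \<psi>" "alternating \<psi>" "j < length ys" "ys ! j = y"
  shows "wedge1 g (contr y \<psi>) ys = g y * \<psi> ys"
  using assms
proof (induction ys arbitrary: \<psi> j)
  case Nil
  then show ?case by simp
next
  case (Cons z zs)
  have expand: "wedge1 g (contr y \<psi>) (z # zs) = g z * \<psi> (y # zs) - wedge1 g (contr z (contr y \<psi>)) zs"
    by (simp add: contr_def)
  show ?case
  proof (cases j)
    case 0
    then have "z = y" using Cons.prems by simp
    then show ?thesis
      using expand by (simp add: contr_contr_same[OF Cons.prems(2)] wedge1_zero)
  next
    case (Suc j')
    have j': "j' < length zs" "zs ! j' = y" using Cons.prems(3,4) Suc by simp_all
    have "\<psi> (y # zs) = 0"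
      using Cons.prems(2) j' unfolding alternating_def
      by (metis length_Cons nth_Cons_0 nth_Cons_Suc Suc_less_eq zero_less_Suc)
    moreover have "wedge1 g (contr z (contr y \<psi>)) zs = - wedge1 g (contr y (contr z \<psi>)) zs"
      by (simp add: contr_commute[OF Cons.prems(1,2), of z y] wedge1_uminus)
    moreover have "wedge1 g (contr y (contr z \<psi>)) zs = g y * \<psi> (z # zs)"
      using Cons.IH[OF multilinear_contr[OF Cons.prems(1)] alternating_contr[OF Cons.prems(2)] j']
      by (simp add: contr_def)
    ultimately show ?thesis using expand by simp
  qed
qed

lemma alternating_wedge1:
  assumes "multilinear \<psi>" "alternating \<psi>"
  shows "alternating (wedge1 g \<psi>)"
  unfolding alternating_def
proof (intro allI impI)
  fix ys :: "'a list" and i j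
  show "i < j \<and> j < length ys \<and> ys ! i = ys ! j \<Longrightarrow> wedge1 g \<psi> ys = 0"
    using assms
  proof (induction ys arbitrary: \<psi> i j)
    case Nil
    then show ?case by simp
  next
    case (Cons y ys)
    obtain j' where j: "j = Suc j'" using Cons.prems(1) by (cases j) auto
    show ?case
    proof (cases i)
      case 0
      then have "ys ! j' = y" "j' < length ys" using Cons.prems(1) j by simp_all
      then show ?thesis using wedge1_contr_repeated[OF Cons.prems(2,3)] by simp
    next
      case (Suc i')
      then have eq: "i' < j' \<and> j' < length ys \<and> ys ! i' = ys ! j'" using Cons.prems(1) j by simp
      then have "\<psi> ys = 0" using Cons.prems(3) unfolding alternating_def by blast
      moreover have "wedge1 g (contr y \<psi>) ys = 0"
        using Cons.IH[OF eq multilinear_contr[OF Cons.prems(2)] alternating_contr[OF Cons.prems(3)]] .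
      ultimately show ?thesis by simp
    qed
  qed
qed

lemma is_form_wedge1:
  assumes "linear g" "is_form m \<psi>"
  shows "is_form (Suc m) (wedge1 g \<psi>)"
  using assms(2) wedge1_degree multilinear_wedge1[OF assms(1)] alternating_wedge1
  unfolding is_form_iff by blast

text \<open>The conditions in \<open>skew_map_on\<close> are necessary for \<open>\<phi>\<close> to be the restriction to \<open>E\<close> of
  \<open>Y \<mapsto> i\<^sub>Y \<beta>\<close> for an \<open>(m+1)\<close>-form \<open>\<beta>\<close>; \<open>contraction_extension\<close> shows they suffice.\<close>

definition skew_map_on :: "nat \<Rightarrow> ('v::real_vector) set \<Rightarrow> ('v \<Rightarrow> 'v form) \<Rightarrow> bool" where
  "skew_map_on m E \<phi> \<longleftrightarrow> (\<forall>Y\<in>E. is_form m (\<phi> Y)) \<and>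
     (\<forall>Y\<in>E. \<forall>Y'\<in>E. \<phi> (Y + Y') = (\<lambda>ys. \<phi> Y ys + \<phi> Y' ys)) \<and>
     (\<forall>c. \<forall>Y\<in>E. \<phi> (c *\<^sub>R Y) = (\<lambda>ys. c * \<phi> Y ys)) \<and>
     (\<forall>Y\<in>E. \<forall>Y'\<in>E. contr Y (\<phi> Y') = (\<lambda>ys. - contr Y' (\<phi> Y) ys))"

lemma skew_map_onD:
  assumes "skew_map_on m E \<phi>"
  shows "\<And>Y. Y \<in> E \<Longrightarrow> is_form m (\<phi> Y)"
    "\<And>Y Y'. Y \<in> E \<Longrightarrow> Y' \<in> E \<Longrightarrow> \<phi> (Y + Y') = (\<lambda>ys. \<phi> Y ys + \<phi> Y' ys)"
    "\<And>c Y. Y \<in> E \<Longrightarrow> \<phi> (c *\<^sub>R Y) = (\<lambda>ys. c * \<phi> Y ys)"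
    "\<And>Y Y'. Y \<in> E \<Longrightarrow> Y' \<in> E \<Longrightarrow> contr Y (\<phi> Y') = (\<lambda>ys. - contr Y' (\<phi> Y) ys)"
  using assms unfolding skew_map_on_def by blast+

lemma skew_map_on_subset: "skew_map_on m E \<phi> \<Longrightarrow> E' \<subseteq> E \<Longrightarrow> skew_map_on m E' \<phi>"
  unfolding skew_map_on_def by blast

lemma contraction_extension_insert:
  fixes e :: "'v::real_vector" and g :: "'v \<Rightarrow> real"
  assumes \<phi>: "skew_map_on m (span (insert e F)) \<phi>"
    and g: "linear g" "g e = 1" "\<forall>Y\<in>span F. g Y = 0"
    and \<beta>': "is_form (Suc m) \<beta>'" "\<forall>Y\<in>span F. contr Y \<beta>' = \<phi> Y"
  shows "\<exists>\<beta>. is_form (Suc m) \<beta> \<and> (\<forall>Y\<in>span (insert e F). contr Y \<beta> = \<phi> Y)"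
proof -
  have F_sub: "span F \<subseteq> span (insert e F)" by (simp add: span_mono subset_insertI)
  have e_in: "e \<in> span (insert e F)" by (simp add: span_base)
  note \<phi>D = skew_map_onD[OF \<phi>]
  define \<psi> where "\<psi> = (\<lambda>ys. \<phi> e ys - contr e \<beta>' ys)"
  \<comment> \<open>\<open>i\<^sub>Y \<psi> = 0\<close> and \<open>g Y = 0\<close> for \<open>Y \<in> span F\<close>, so the correction \<open>g \<and> \<psi>\<close> only acts in direction \<open>e\<close>\<close>
  define \<beta> where "\<beta> = (\<lambda>ys. \<beta>' ys + wedge1 g \<psi> ys)"
  have \<psi>_form: "is_form m \<psi>"
    unfolding \<psi>_def using is_form_diff[OF \<phi>D(1)[OF e_in] is_form_contr[OF \<beta>'(1)]] .
  have \<beta>_form: "is_form (Suc m) \<beta>"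
    unfolding \<beta>_def by (rule is_form_add[OF \<beta>'(1) is_form_wedge1[OF g(1) \<psi>_form]])
  have contr_\<beta>: "contr Y \<beta> = (\<lambda>ys. contr Y \<beta>' ys + g Y * \<psi> ys - wedge1 g (contr Y \<psi>) ys)" for Y
    unfolding \<beta>_def contr_add contr_wedge1 by (simp add: algebra_simps)
  have at_e: "contr e \<beta> = \<phi> e"
  proof -
    have "contr e (\<phi> e) = (\<lambda>_. 0)"
      using \<phi>D(4)[OF e_in e_in] by (simp add: fun_eq_iff)
    then have "contr e \<psi> = (\<lambda>_. 0)"
      unfolding \<psi>_def contr_diff contr_contr_same[OF is_form_alternating[OF \<beta>'(1)]] by simp
    then show ?thesis using g(2) by (simp add: contr_\<beta> wedge1_zero \<psi>_def)
  qed
  have on_F: "contr Y \<beta> = \<phi> Y" if Y: "Y \<in> span F" for Y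
  proof -
    have "contr Y \<psi> = (\<lambda>_. 0)"
    proof (rule ext)
      fix ys
      have "contr Y \<psi> ys = contr Y (\<phi> e) ys - \<beta>' (e # Y # ys)" by (simp add: \<psi>_def contr_def)
      also have "contr Y (\<phi> e) ys = - contr e (\<phi> Y) ys"
        using \<phi>D(4)[OF subsetD[OF F_sub Y] e_in] by (simp add: fun_eq_iff)
      also have "\<beta>' (e # Y # ys) = - \<beta>' (Y # e # ys)"
        using alternating_swap is_form_multilinear is_form_alternating \<beta>'(1) by blast
      also have "\<beta>' (Y # e # ys) = \<phi> Y (e # ys)" using \<beta>'(2) Y by (simp add: contr_def fun_eq_iff)
      finally show "contr Y \<psi> ys = 0" by (simp add: contr_def)
    qed
    then show ?thesis using \<beta>'(2) Y g(3) by (simp add: contr_\<beta> wedge1_zero)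
  qed
  have "contr Y \<beta> = \<phi> Y" if Y: "Y \<in> span (insert e F)" for Y
  proof -
    obtain c where c: "Y - c *\<^sub>R e \<in> span F" using Y span_breakdown_eq by blast
    have Y_eq: "Y = (Y - c *\<^sub>R e) + c *\<^sub>R e" by simp
    have "contr Y \<beta> = (\<lambda>ys. contr (Y - c *\<^sub>R e) \<beta> ys + c * contr e \<beta> ys)"
      by (subst Y_eq) (rule contr_add_left[OF is_form_multilinear[OF \<beta>_form]])
    also have "\<dots> = (\<lambda>ys. \<phi> (Y - c *\<^sub>R e) ys + c * \<phi> e ys)" using on_F[OF c] at_e by simp
    also have "\<dots> = \<phi> Y"
      using \<phi>D(2)[OF subsetD[OF F_sub c] span_mul[OF e_in, of c]] \<phi>D(3)[OF e_in, of c] by simp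
    finally show ?thesis .
  qed
  then show ?thesis using \<beta>_form by blast
qed

lemma contraction_extension_basis:
  fixes B :: "'v::real_vector set"
  assumes "finite B" "independent B" "skew_map_on m (span B) \<phi>"
  shows "\<exists>\<beta>. is_form (Suc m) \<beta> \<and> (\<forall>Y\<in>span B. contr Y \<beta> = \<phi> Y)"
  using assms
proof (induction B rule: finite_induct)
  case empty
  have "\<phi> 0 = (\<lambda>ys. 0)"
    using skew_map_onD(3)[OF empty.prems(2) span_zero, of 0] by simp
  then show ?case using is_form_zero by (auto simp: contr_def)
next
  case (insert e F)
  have "independent F"
    using insert.prems(1) insert.hyps(2) by (auto simp: independent_insert)
  moreover have "skew_map_on m (span F) \<phi>"
    using insert.prems(2) by (rule skew_map_on_subset) (simp add: span_mono subset_insertI)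
  ultimately obtain \<beta>' where \<beta>': "is_form (Suc m) \<beta>'" "\<forall>Y\<in>span F. contr Y \<beta>' = \<phi> Y"
    using insert.IH by blast
  obtain g :: "'v \<Rightarrow> real" where g: "linear g" "\<forall>x\<in>insert e F. g x = (if x = e then 1 else 0)"
    using linear_independent_extend[OF insert.prems(1), of "\<lambda>x. if x = e then 1 else 0"] by auto
  have "\<forall>x\<in>F. g x = 0" using g(2) insert.hyps(2) by auto
  then have g0: "\<forall>Y\<in>span F. g Y = 0" using linear_eq_0_on_span[OF g(1)] by blast
  have ge: "g e = 1" using g(2) by simp
  show ?case by (rule contraction_extension_insert[OF insert.prems(2) g(1) ge g0 \<beta>'])
qed

lemma contraction_extension:
  fixes E :: "'v::euclidean_space set"
  assumes "subspace E" "skew_map_on m E \<phi>"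
  shows "\<exists>\<beta>. is_form (Suc m) \<beta> \<and> (\<forall>Y\<in>E. contr Y \<beta> = \<phi> Y)"
proof -
  obtain B where B: "B \<subseteq> E" "independent B" "E \<subseteq> span B" "card B = dim E"
    by (rule basis_exists)
  have span_B: "span B = E" using span_subspace[OF B(1,3) assms(1)] .
  show ?thesis
    using contraction_extension_basis[OF finiteI_independent[OF B(2)] B(2)] assms(2)
    unfolding span_B .
qed

lemma higher_poissonD:
  assumes "higher_poisson k S \<Lambda>"
  shows "\<And>a. a \<in> S \<Longrightarrow> is_form k a" "(\<lambda>_. 0) \<in> S"
    "\<And>a b. a \<in> S \<Longrightarrow> b \<in> S \<Longrightarrow> (\<lambda>ys. a ys + b ys) \<in> S"
    "\<And>c a. a \<in> S \<Longrightarrow> (\<lambda>ys. c * a ys) \<in> S"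
    "\<And>a b. a \<in> S \<Longrightarrow> b \<in> S \<Longrightarrow> \<Lambda> (\<lambda>ys. a ys + b ys) = \<Lambda> a + \<Lambda> b"
    "\<And>c a. a \<in> S \<Longrightarrow> \<Lambda> (\<lambda>ys. c * a ys) = c *\<^sub>R \<Lambda> a"
    "\<And>a b. a \<in> S \<Longrightarrow> b \<in> S \<Longrightarrow> contr (\<Lambda> a) b = (\<lambda>ys. - contr (\<Lambda> b) a ys)"
    "\<Lambda> (\<lambda>_. 0) = 0"
proof -
  have hp: "form_subspace k S" "\<forall>a\<in>S. \<forall>b\<in>S. \<Lambda> (\<lambda>ys. a ys + b ys) = \<Lambda> a + \<Lambda> b"
    "\<forall>c::real. \<forall>a\<in>S. \<Lambda> (\<lambda>ys. c * a ys) = c *\<^sub>R \<Lambda> a"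
    "\<forall>\<alpha>\<in>S. \<forall>\<beta>\<in>S. contr (\<Lambda> \<alpha>) \<beta> = (\<lambda>ys. - contr (\<Lambda> \<beta>) \<alpha> ys)"
    using assms unfolding higher_poisson_def by blast+
  have S: "S \<subseteq> Forms k" "(\<lambda>_. 0) \<in> S" "\<forall>a\<in>S. \<forall>b\<in>S. (\<lambda>ys. a ys + b ys) \<in> S"
    "\<forall>c::real. \<forall>a\<in>S. (\<lambda>ys. c * a ys) \<in> S"
    using hp(1) unfolding form_subspace_def by blast+
  show "\<And>a. a \<in> S \<Longrightarrow> is_form k a" using S(1) by (auto simp: Forms_def)
  show "(\<lambda>_. 0) \<in> S" by (fact S(2))
  show "\<And>a b. a \<in> S \<Longrightarrow> b \<in> S \<Longrightarrow> (\<lambda>ys. a ys + b ys) \<in> S"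
    and "\<And>c a. a \<in> S \<Longrightarrow> (\<lambda>ys. c * a ys) \<in> S"
    and "\<And>a b. a \<in> S \<Longrightarrow> b \<in> S \<Longrightarrow> \<Lambda> (\<lambda>ys. a ys + b ys) = \<Lambda> a + \<Lambda> b"
    and "\<And>c a. a \<in> S \<Longrightarrow> \<Lambda> (\<lambda>ys. c * a ys) = c *\<^sub>R \<Lambda> a"
    and "\<And>a b. a \<in> S \<Longrightarrow> b \<in> S \<Longrightarrow> contr (\<Lambda> a) b = (\<lambda>ys. - contr (\<Lambda> b) a ys)"
    using S(3,4) hp(2-4) by blast+
  show "\<Lambda> (\<lambda>_. 0) = 0"
    using hp(3)[rule_format, OF S(2), of 0] by simp
qed

lemma higher_poisson_diff:
  assumes "higher_poisson k S \<Lambda>" "a \<in> S" "b \<in> S"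
  shows "(\<lambda>ys. a ys - b ys) \<in> S" "\<Lambda> (\<lambda>ys. a ys - b ys) = \<Lambda> a - \<Lambda> b"
  using higher_poissonD(3,5)[OF assms(1,2) higher_poissonD(4)[OF assms(1,3), of "-1"]]
    higher_poissonD(6)[OF assms(1,3), of "-1"]
  by simp_all

lemma subspace_image_higher_poisson:
  assumes "higher_poisson k S \<Lambda>"
  shows "subspace (\<Lambda> ` S)"
  unfolding subspace_def
proof (intro conjI ballI allI)
  show "0 \<in> \<Lambda> ` S" using higher_poissonD(2,8)[OF assms] by force
next
  fix x y assume "x \<in> \<Lambda> ` S" "y \<in> \<Lambda> ` S"
  then obtain a b where ab: "a \<in> S" "b \<in> S" and "x = \<Lambda> a" "y = \<Lambda> b" by blast
  then have "x + y = \<Lambda> (\<lambda>ys. a ys + b ys)" using higher_poissonD(5)[OF assms ab] by simp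
  then show "x + y \<in> \<Lambda> ` S" using higher_poissonD(3)[OF assms ab] by (rule image_eqI)
next
  fix c :: real and x assume "x \<in> \<Lambda> ` S"
  then obtain a where a: "a \<in> S" and "x = \<Lambda> a" by blast
  then have "c *\<^sub>R x = \<Lambda> (\<lambda>ys. c * a ys)" using higher_poissonD(6)[OF assms a] by simp
  then show "c *\<^sub>R x \<in> \<Lambda> ` S" using higher_poissonD(4)[OF assms a] by (rule image_eqI)
qed

lemma fst_graph: "fst ` graph S \<Lambda> = \<Lambda> ` S"
  unfolding graph_def by force

lemma mem_graph_iff: "u \<in> graph S \<Lambda> \<longleftrightarrow> snd u \<in> S \<and> fst u = \<Lambda> (snd u)"
  unfolding graph_def by (cases u) auto

lemma perp_graph_iff:
  "(X, \<beta>) \<in> perp k (graph S \<Lambda>) \<longleftrightarrow>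
     is_form k \<beta> \<and> (\<forall>\<gamma>\<in>S. contr (\<Lambda> \<gamma>) \<beta> = (\<lambda>ys. - contr X \<gamma> ys))"
proof -
  have "(X, \<beta>) \<in> perp k (graph S \<Lambda>) \<longleftrightarrow>
      is_form k \<beta> \<and> (\<forall>\<gamma>\<in>S. pairing (X, \<beta>) (\<Lambda> \<gamma>, \<gamma>) = (\<lambda>_. 0))"
    unfolding perp_def Amb_def Forms_def graph_def by blast
  then show ?thesis by (simp add: pairing_def fun_eq_iff add_eq_0_iff)
qed

lemma isotropic_graph:
  assumes "higher_poisson k S \<Lambda>"
  shows "isotropic k (graph S \<Lambda>)"
  unfolding isotropic_def
proof
  fix u assume "u \<in> graph S \<Lambda>"
  then obtain a where u: "u = (\<Lambda> a, a)" and a: "a \<in> S" by (auto simp: graph_def)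
  have "\<forall>\<gamma>\<in>S. contr (\<Lambda> \<gamma>) a = (\<lambda>ys. - contr (\<Lambda> a) \<gamma> ys)"
    using higher_poissonD(7)[OF assms _ a] by blast
  then show "u \<in> perp k (graph S \<Lambda>)"
    using higher_poissonD(1)[OF assms a] by (simp add: u perp_graph_iff)
qed

lemma capV_graph:
  assumes "higher_poisson k S \<Lambda>"
  shows "capV (graph S \<Lambda>) = {0}"
  using higher_poissonD(2,8)[OF assms] by (auto simp: capV_def graph_def)

lemma weakly_lagrangian_is_graph:
  assumes L: "amb_subspace k L" and wl: "weakly_lagrangian k L" and trivial: "capV L = {0}"
  shows "\<exists>S \<Lambda>. higher_poisson k S \<Lambda> \<and> L = graph S \<Lambda>"
proof -
  have L_Amb: "L \<subseteq> Amb k" and L_zero: "(0, \<lambda>_. 0) \<in> L"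
    and L_add: "\<And>u w. u \<in> L \<Longrightarrow> w \<in> L \<Longrightarrow> (fst u + fst w, \<lambda>ys. snd u ys + snd w ys) \<in> L"
    and L_scale: "\<And>c u. u \<in> L \<Longrightarrow> (c *\<^sub>R fst u, \<lambda>ys. c * snd u ys) \<in> L"
    using L unfolding amb_subspace_def by auto
  have unique: "X = X'" if "(X, \<alpha>) \<in> L" "(X', \<alpha>) \<in> L" for X X' \<alpha>
  proof -
    have "(X + (-1) *\<^sub>R X', \<lambda>ys. \<alpha> ys + -1 * \<alpha> ys) \<in> L"
      using L_add[OF that(1) L_scale[OF that(2), of "-1"]] by simp
    then have "X - X' \<in> capV L" by (simp add: capV_def)
    then show ?thesis using trivial by simp
  qed
  define S where "S = snd ` L"
  define \<Lambda> where "\<Lambda> = (\<lambda>\<alpha>. THE X. (X, \<alpha>) \<in> L)"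
  have \<Lambda>_eq: "\<Lambda> \<alpha> = X" if "(X, \<alpha>) \<in> L" for X \<alpha>
    unfolding \<Lambda>_def using that unique by (metis (no_types, lifting) the_equality)
  have L_eq: "L = graph S \<Lambda>"
    unfolding graph_def S_def using \<Lambda>_eq by force
  have \<Lambda>_in: "(\<Lambda> a, a) \<in> L" if "a \<in> S" for a
    using that by (simp add: L_eq graph_def)
  have "form_subspace k S"
    unfolding form_subspace_def
  proof (intro conjI ballI allI)
    show "S \<subseteq> Forms k" using L_Amb by (auto simp: S_def Amb_def)
    show "(\<lambda>_. 0) \<in> S" using L_zero unfolding S_def by force
  next
    fix a b assume "a \<in> S" "b \<in> S"
    from L_add[OF \<Lambda>_in[OF this(1)] \<Lambda>_in[OF this(2)]] show "(\<lambda>ys. a ys + b ys) \<in> S"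
      unfolding S_def by force
  next
    fix c :: real and a assume "a \<in> S"
    from L_scale[OF \<Lambda>_in[OF this]] show "(\<lambda>ys. c * a ys) \<in> S"
      unfolding S_def by force
  qed
  then have "higher_poisson k S \<Lambda>"
    unfolding higher_poisson_def
  proof (intro conjI ballI allI)
    show "circ S = {0}"
      using wl trivial by (simp add: weakly_lagrangian_def S_def)
  next
    fix a b assume ab: "a \<in> S" "b \<in> S"
    show "\<Lambda> (\<lambda>ys. a ys + b ys) = \<Lambda> a + \<Lambda> b"
      using \<Lambda>_eq[OF L_add[OF \<Lambda>_in[OF ab(1)] \<Lambda>_in[OF ab(2)]]] by simp
    have "(\<Lambda> b, b) \<in> perp k (graph S \<Lambda>)"
      using wl \<Lambda>_in[OF ab(2)] L_eq by (auto simp: weakly_lagrangian_def isotropic_def)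
    then show "contr (\<Lambda> a) b = (\<lambda>ys. - contr (\<Lambda> b) a ys)"
      unfolding perp_graph_iff using ab(1) by blast
  next
    fix c :: real and a assume "a \<in> S"
    show "\<Lambda> (\<lambda>ys. c * a ys) = c *\<^sub>R \<Lambda> a"
      using \<Lambda>_eq[OF L_scale[OF \<Lambda>_in[OF \<open>a \<in> S\<close>]]] by simp
  qed
  then show ?thesis using L_eq by blast
qed

lemma fst_perp_graph_subset:
  assumes "higher_poisson k S \<Lambda>"
  shows "fst ` perp k (graph S \<Lambda>) \<subseteq> circ {\<alpha> \<in> S. \<Lambda> \<alpha> = 0}"
proof
  fix X assume "X \<in> fst ` perp k (graph S \<Lambda>)"
  then obtain \<beta> where "(X, \<beta>) \<in> perp k (graph S \<Lambda>)" by force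
  then have \<beta>: "is_form k \<beta>" "\<forall>\<gamma>\<in>S. contr (\<Lambda> \<gamma>) \<beta> = (\<lambda>ys. - contr X \<gamma> ys)"
    unfolding perp_graph_iff by blast+
  have "contr X \<delta> = (\<lambda>_. 0)" if \<delta>: "\<delta> \<in> S" "\<Lambda> \<delta> = 0" for \<delta>
  proof -
    have "(\<lambda>ys. - contr X \<delta> ys) = contr (\<Lambda> \<delta>) \<beta>" using \<beta>(2) \<delta>(1) by simp
    also have "\<dots> = contr 0 \<beta>" using \<delta>(2) by simp
    also have "\<dots> = (\<lambda>_. 0)" by (rule contr_zero_left[OF is_form_multilinear[OF \<beta>(1)]])
    finally show ?thesis by (simp add: fun_eq_iff)
  qed
  then show "X \<in> circ {\<alpha> \<in> S. \<Lambda> \<alpha> = 0}" by (auto simp: circ_def)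
qed

text \<open>For \<open>X \<in> (ker \<Lambda>)\<^sup>\<circ>\<close> the map \<open>\<Lambda> \<gamma> \<mapsto> -i\<^sub>X \<gamma>\<close> is well defined on \<open>\<Lambda>(S)\<close>, and the skew
  condition on \<open>\<Lambda>\<close> makes it a \<open>skew_map_on\<close>; a \<open>k\<close>-form extending it is the partner of \<open>X\<close>
  in \<open>L\<^sup>\<perp>\<close>.\<close>

lemma circ_ker_subset_fst_perp_graph:
  fixes \<Lambda> :: "'v::euclidean_space form \<Rightarrow> 'v"
  assumes hp: "higher_poisson k S \<Lambda>" and k: "1 \<le> k"
  shows "circ {\<alpha> \<in> S. \<Lambda> \<alpha> = 0} \<subseteq> fst ` perp k (graph S \<Lambda>)"
proof
  fix X assume X: "X \<in> circ {\<alpha> \<in> S. \<Lambda> \<alpha> = 0}"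
  note h = higher_poissonD[OF hp]
  define \<phi> where "\<phi> = (\<lambda>Y ys. - contr X (SOME \<alpha>. \<alpha> \<in> S \<and> \<Lambda> \<alpha> = Y) ys)"
  have \<phi>_eq: "\<phi> (\<Lambda> \<alpha>) = (\<lambda>ys. - contr X \<alpha> ys)" if \<alpha>: "\<alpha> \<in> S" for \<alpha>
  proof -
    define \<alpha>' where "\<alpha>' = (SOME \<alpha>'. \<alpha>' \<in> S \<and> \<Lambda> \<alpha>' = \<Lambda> \<alpha>)"
    have \<alpha>': "\<alpha>' \<in> S" "\<Lambda> \<alpha>' = \<Lambda> \<alpha>"
      unfolding \<alpha>'_def using someI[of "\<lambda>\<alpha>'. \<alpha>' \<in> S \<and> \<Lambda> \<alpha>' = \<Lambda> \<alpha>" \<alpha>] \<alpha> by auto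
    have "contr X (\<lambda>ys. \<alpha>' ys - \<alpha> ys) = (\<lambda>_. 0)"
      using X higher_poisson_diff[OF hp \<alpha>'(1) \<alpha>] \<alpha>'(2) by (simp add: circ_def)
    then show ?thesis by (simp add: \<phi>_def \<alpha>'_def[symmetric] contr_def fun_eq_iff)
  qed
  have "skew_map_on (k - 1) (\<Lambda> ` S) \<phi>"
    unfolding skew_map_on_def
  proof (intro conjI ballI allI)
    fix Y assume "Y \<in> \<Lambda> ` S"
    then obtain a where a: "a \<in> S" and Y: "Y = \<Lambda> a" by blast
    have "is_form (Suc (k - 1)) a" using h(1)[OF a] k by simp
    then show "is_form (k - 1) (\<phi> Y)"
      unfolding Y \<phi>_eq[OF a] by (intro is_form_uminus is_form_contr)
    fix c :: real
    show "\<phi> (c *\<^sub>R Y) = (\<lambda>ys. c * \<phi> Y ys)"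
      using \<phi>_eq[OF h(4)[OF a, of c]] by (simp add: Y h(6)[OF a] \<phi>_eq[OF a] contr_def)
  next
    fix Y Y' assume "Y \<in> \<Lambda> ` S" "Y' \<in> \<Lambda> ` S"
    then obtain a b where ab: "a \<in> S" "b \<in> S" and Y: "Y = \<Lambda> a" "Y' = \<Lambda> b" by blast
    show "\<phi> (Y + Y') = (\<lambda>ys. \<phi> Y ys + \<phi> Y' ys)"
      using \<phi>_eq[OF h(3)[OF ab]] by (simp add: Y h(5)[OF ab] \<phi>_eq ab contr_def)
    show "contr Y (\<phi> Y') = (\<lambda>ys. - contr Y' (\<phi> Y) ys)"
    proof (rule ext)
      fix ys
      have "contr Y (\<phi> Y') ys = - b (X # \<Lambda> a # ys)"
        by (simp add: Y \<phi>_eq ab contr_def)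
      also have "b (X # \<Lambda> a # ys) = - b (\<Lambda> a # X # ys)"
        using alternating_swap is_form_multilinear is_form_alternating h(1)[OF ab(2)] by blast
      also have "b (\<Lambda> a # X # ys) = - a (\<Lambda> b # X # ys)"
        using h(7)[OF ab] by (simp add: contr_def fun_eq_iff)
      also have "a (\<Lambda> b # X # ys) = - a (X # \<Lambda> b # ys)"
        using alternating_swap is_form_multilinear is_form_alternating h(1)[OF ab(1)] by blast
      finally show "contr Y (\<phi> Y') ys = - contr Y' (\<phi> Y) ys"
        by (simp add: Y \<phi>_eq ab contr_def)
    qed
  qed
  then obtain \<beta> where \<beta>: "is_form (Suc (k - 1)) \<beta>" "\<forall>Y\<in>\<Lambda> ` S. contr Y \<beta> = \<phi> Y"
    using contraction_extension[OF subspace_image_higher_poisson[OF hp]] by blast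
  have "(X, \<beta>) \<in> perp k (graph S \<Lambda>)"
    unfolding perp_graph_iff
  proof (intro conjI ballI)
    show "is_form k \<beta>" using \<beta>(1) k by simp
    fix \<gamma> assume "\<gamma> \<in> S"
    then show "contr (\<Lambda> \<gamma>) \<beta> = (\<lambda>ys. - contr X \<gamma> ys)" using \<beta>(2) \<phi>_eq by simp
  qed
  then show "X \<in> fst ` perp k (graph S \<Lambda>)" by force
qed

lemma ker_subset_Ann_image:
  assumes "higher_poisson k S \<Lambda>"
  shows "{\<alpha> \<in> S. \<Lambda> \<alpha> = 0} \<subseteq> Ann k (\<Lambda> ` S)"
proof
  fix \<alpha> assume \<alpha>: "\<alpha> \<in> {\<alpha> \<in> S. \<Lambda> \<alpha> = 0}"
  have "contr (\<Lambda> \<gamma>) \<alpha> = (\<lambda>_. 0)" if \<gamma>: "\<gamma> \<in> S" for \<gamma>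
  proof -
    have "contr (\<Lambda> \<gamma>) \<alpha> = (\<lambda>ys. - contr 0 \<gamma> ys)"
      using higher_poissonD(7)[OF assms \<gamma>, of \<alpha>] \<alpha> by simp
    then show ?thesis
      using contr_zero_left[OF is_form_multilinear[OF higher_poissonD(1)[OF assms \<gamma>]]] by simp
  qed
  then show "\<alpha> \<in> Ann k (\<Lambda> ` S)"
    using \<alpha> higher_poissonD(1)[OF assms] by (auto simp: Ann_def Forms_def)
qed

lemma Ann_image_subset_ker_if_lagrangian:
  assumes "higher_poisson k S \<Lambda>" "lagrangian k (graph S \<Lambda>)"
  shows "Ann k (\<Lambda> ` S) \<subseteq> {\<alpha> \<in> S. \<Lambda> \<alpha> = 0}"
proof
  fix \<alpha> assume \<alpha>: "\<alpha> \<in> Ann k (\<Lambda> ` S)"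
  have "contr 0 \<gamma> = (\<lambda>_. 0)" if "\<gamma> \<in> S" for \<gamma>
    using contr_zero_left[OF is_form_multilinear[OF higher_poissonD(1)[OF assms(1) that]]] .
  then have "(0, \<alpha>) \<in> perp k (graph S \<Lambda>)"
    using \<alpha> by (auto simp: Ann_def Forms_def perp_graph_iff)
  then have "(0, \<alpha>) \<in> graph S \<Lambda>"
    using assms(2) unfolding lagrangian_def by blast
  then show "\<alpha> \<in> {\<alpha> \<in> S. \<Lambda> \<alpha> = 0}" by (simp add: mem_graph_iff)
qed

lemma lagrangian_graph_if_standard:
  assumes hp: "higher_poisson k S \<Lambda>"
    and std: "circ (Ann k (\<Lambda> ` S)) = \<Lambda> ` S" and Ann: "Ann k (\<Lambda> ` S) = {\<alpha> \<in> S. \<Lambda> \<alpha> = 0}"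
  shows "lagrangian k (graph S \<Lambda>)"
proof -
  have "(X, \<beta>) \<in> graph S \<Lambda>" if perp: "(X, \<beta>) \<in> perp k (graph S \<Lambda>)" for X \<beta>
  proof -
    have "X \<in> \<Lambda> ` S"
      using fst_perp_graph_subset[OF hp] perp std Ann by force
    then obtain \<alpha> where \<alpha>: "\<alpha> \<in> S" "X = \<Lambda> \<alpha>" by blast
    have \<beta>: "is_form k \<beta>" "\<forall>\<gamma>\<in>S. contr (\<Lambda> \<gamma>) \<beta> = (\<lambda>ys. - contr X \<gamma> ys)"
      using perp unfolding perp_graph_iff by blast+
    define \<delta> where "\<delta> = (\<lambda>ys. \<beta> ys - \<alpha> ys)"
    have "contr (\<Lambda> \<gamma>) \<delta> = (\<lambda>_. 0)" if \<gamma>: "\<gamma> \<in> S" for \<gamma>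
    proof -
      have "contr (\<Lambda> \<gamma>) \<beta> = (\<lambda>ys. - contr X \<gamma> ys)" using \<beta>(2) \<gamma> by blast
      moreover have "contr (\<Lambda> \<gamma>) \<alpha> = (\<lambda>ys. - contr X \<gamma> ys)"
        using higher_poissonD(7)[OF hp \<gamma> \<alpha>(1)] \<alpha>(2) by simp
      ultimately show ?thesis by (simp add: \<delta>_def contr_diff)
    qed
    then have "\<delta> \<in> Ann k (\<Lambda> ` S)"
      using is_form_diff[OF \<beta>(1) higher_poissonD(1)[OF hp \<alpha>(1)]] by (auto simp: Ann_def Forms_def \<delta>_def)
    then have \<delta>: "\<delta> \<in> S" "\<Lambda> \<delta> = 0" using Ann by auto
    have "\<beta> = (\<lambda>ys. \<alpha> ys + \<delta> ys)" by (simp add: \<delta>_def)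
    then have "\<beta> \<in> S \<and> \<Lambda> \<beta> = X"
      using higher_poissonD(3,5)[OF hp \<alpha>(1) \<delta>(1)] \<delta>(2) \<alpha>(2) by simp
    then show ?thesis by (simp add: mem_graph_iff)
  qed
  then show ?thesis
    using isotropic_graph[OF hp] by (auto simp: lagrangian_def isotropic_def)
qed

lemma lagrangian_graph_iff:
  fixes \<Lambda> :: "'v::euclidean_space form \<Rightarrow> 'v"
  assumes hp: "higher_poisson k S \<Lambda>" and k: "1 \<le> k"
  shows "lagrangian k (graph S \<Lambda>) \<longleftrightarrow>
    standard k (graph S \<Lambda>) \<and> Ann k (\<Lambda> ` S) = {\<alpha> \<in> S. \<Lambda> \<alpha> = 0}"
proof
  assume lag: "lagrangian k (graph S \<Lambda>)"
  then have perp_eq: "perp k (graph S \<Lambda>) = graph S \<Lambda>" unfolding lagrangian_def by (rule sym)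
  have Ann: "Ann k (\<Lambda> ` S) = {\<alpha> \<in> S. \<Lambda> \<alpha> = 0}"
    using Ann_image_subset_ker_if_lagrangian[OF hp lag] ker_subset_Ann_image[OF hp] by blast
  have "\<Lambda> ` S = fst ` perp k (graph S \<Lambda>)"
    by (simp add: perp_eq fst_graph)
  also have "\<dots> = circ {\<alpha> \<in> S. \<Lambda> \<alpha> = 0}"
    using fst_perp_graph_subset[OF hp] circ_ker_subset_fst_perp_graph[OF hp k] by (rule subset_antisym)
  also have "\<dots> = circ (Ann k (\<Lambda> ` S))" by (simp only: Ann)
  finally have "circ (Ann k (\<Lambda> ` S)) = \<Lambda> ` S" by (rule sym)
  then show "standard k (graph S \<Lambda>) \<and> Ann k (\<Lambda> ` S) = {\<alpha> \<in> S. \<Lambda> \<alpha> = 0}"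
    using isotropic_graph[OF hp] Ann unfolding standard_def fst_graph by blast
next
  assume "standard k (graph S \<Lambda>) \<and> Ann k (\<Lambda> ` S) = {\<alpha> \<in> S. \<Lambda> \<alpha> = 0}"
  then show "lagrangian k (graph S \<Lambda>)"
    using lagrangian_graph_if_standard[OF hp] unfolding standard_def fst_graph by blast
qed

theorem proposition3p16:
  fixes L :: "('v::euclidean_space \<times> 'v form) set" and k n :: nat
  assumes "DIM('v) = n" and "1 \<le> k" and "k \<le> n - 1"
    and "amb_subspace k L" and "weakly_lagrangian k L"
  shows "(capV L = {0} \<longleftrightarrow> (\<exists>S \<Lambda>. higher_poisson k S \<Lambda> \<and> L = graph S \<Lambda>))
    \<and> (\<forall>S \<Lambda>. higher_poisson k S \<Lambda> \<and> L = graph S \<Lambda> \<longrightarrow>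
         (lagrangian k L \<longleftrightarrow>
            standard k L \<and> Ann k (\<Lambda> ` S) = {\<alpha> \<in> S. \<Lambda> \<alpha> = 0}))"
  using weakly_lagrangian_is_graph[OF assms(4,5)] capV_graph lagrangian_graph_iff[OF _ assms(2)]
  by blast

end
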